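(* Let $\mathcal{M} = (\Sigma_\Box, Q, q_{in}, q_{fin}, \delta)$ be a Turing machine. There exist a closed term $\mathtt{trans} \in \Lambda_{\mathtt{det}}$ and a constant $c$ (depending only on $\mathcal{M}$) such that for every value $k$ and every configuration $C$: (1) if a final configuration $D$ is reachable from $C$ in $n$ transition steps of $\mathcal{M}$, then $\mathtt{trans}\;k\;\ulcorner C\urcorner \to_{\mathtt{det}}^{m} k\;\ulcorner D\urcorner$ for some $m \le c\,(n+1)$; (2) if no final configuration is reachable from $C$, then $\mathtt{trans}\;k\;\ulcorner C\urcorner$ diverges, i.e. it has an infinite $\to_{\mathtt{det}}$-reduction sequence.
   Context: The deterministic $\lambda$-calculus $\Lambda_{\mathtt{det}}$ has terms and values given by the grammar: terms $t ::= v \mid t\,v$; values $v ::= \lambda x.t \mid x$. Evaluation contexts are $E ::= [\cdot] \mid E\,v$ (they never enter abstractions). The reduction $\to_{\mathtt{det}}$ is the closure under evaluation contexts of $(\lambda x.t)\,s \mapsto t\{x:=s\}$; $t \to_{\mathtt{det}}^n s$ means $t$ reduces to $s$ in exactly $n$ steps. Application associates to the left. Scott encoding: for a finite totally ordered alphabet $\Gamma = \{c_1,\dots,c_m\}$, $\ulcorner c_i\urcorner^{\Gamma} := \lambda x_1.\cdots.\lambda x_m.x_i$, $\ulcorner \varepsilon\urcorner^{\Gamma^*} := \lambda x_1.\cdots.\lambda x_m.\lambda y.y$ and $\ulcorner c_i r\urcorner^{\Gamma^*} := \lambda x_1.\cdots.\lambda x_m.\lambda y.\,x_i\,\ulcorner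 r\urcorner^{\Gamma^*}$. Turing machines: $\mathcal{M} = (\Sigma_\Box, Q, q_{in}, q_{fin}, \delta)$ where $\Sigma = \{a_1,\dots,a_n\}$ is a finite alphabet, $\Sigma_\Box = \Sigma\cup\{\Box\}$ with blank symbol $\Box\notin\Sigma$ ordered last, $Q=\{q_1,\dots,q_m\}$ is a finite ordered set of states (treated as an alphabet for encoding), $q_{in},q_{fin}\in Q$, and $\delta : Q\times\Sigma_\Box \rightharpoonup Q\times\Sigma_\Box\times\{\leftarrow,\rightarrow,\downarrow\}$ is defined exactly on pairs with first component $\neq q_{fin}$. A configuration is $(s,a,r,q)\in\Sigma_\Box^*\times\Sigma_\Box\times\Sigma_\Box^*\times Q$ (tape left of the head, head cell, tape right of the head, state); it is final if $q = q_{fin}$. The transition relation $\to_{\mathcal{M}}$: if $\delta(q,a) = (q',b,\downarrow)$ then $(s,a,r,q)\to_{\mathcal{M}}(s,b,r,q')$; if $\delta(q,a)=(q',b,\leftarrow)$ then $(s'c,a,r,q)\to_{\mathcal{M}}(s',c,br,q')$ and $(\varepsilon,a,r,q)\to_{\mathcal{M}}(\varepsilon,\Box,br,q')$; if $\delta(q,a)=(q',b,\rightarrow)$ then $(s,a,cr',q)\to_{\mathcal{M}}(sb,c,r',q')$ and $(s,a,\varepsilon,q)\to_{\mathcal{M}}(sb,\Box,\varepsilon,q')$. Encoding of configurations: $\ulcorner (s,a,r,q)\urcorner := \lambda x.\, x\,\ulcorner s^R\urcorner^{\Sigma_\Box^*}\,\ulcorner a\urcorner^{\Sigma_\Box}\,\ulcorner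 r\urcorner^{\Sigma_\Box^*}\,\ulcorner q\urcorner^{Q}$, where $s^R$ is the reverse of $s$. *)

theory Defs
  imports Main
begin

datatype trm = Var nat | Lam trm | App trm trm

fun is_val :: "trm \<Rightarrow> bool" where
  "is_val (Var _) = True"
| "is_val (Lam _) = True"
| "is_val (App _ _) = False"

fun det_term :: "trm \<Rightarrow> bool" where
  "det_term (Var _) = True"
| "det_term (Lam t) = det_term t"
| "det_term (App t u) = (det_term t \<and> is_val u \<and> det_term u)"

fun closed_at :: "nat \<Rightarrow> trm \<Rightarrow> bool" where
  "closed_at k (Var i) = (i < k)"
| "closed_at k (Lam t) = closed_at (Suc k) t"
| "closed_at k (App t u) = (closed_at k t \<and> closed_at k u)"

definition closed :: "trm \<Rightarrow> bool" where
  "closed t = closed_at 0 t"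

fun lift :: "trm \<Rightarrow> nat \<Rightarrow> trm" where
  "lift (Var i) k = (if i < k then Var i else Var (Suc i))"
| "lift (Lam t) k = Lam (lift t (Suc k))"
| "lift (App t u) k = App (lift t k) (lift u k)"

fun subst :: "trm \<Rightarrow> nat \<Rightarrow> trm \<Rightarrow> trm" where
  "subst (Var i) k s = (if i < k then Var i else if i = k then s else Var (i - 1))"
| "subst (Lam t) k s = Lam (subst t (Suc k) (lift s 0))"
| "subst (App t u) k s = App (subst t k s) (subst u k s)"

inductive det_step :: "trm \<Rightarrow> trm \<Rightarrow> bool" where
  beta: "det_step (App (Lam t) s) (subst t 0 s)"
| ctx:  "det_step t t' \<Longrightarrow> det_step (App t v) (App t' v)"

definition diverges :: "trm \<Rightarrow> bool" where
  "diverges t \<longleftrightarrow> (\<exists>f. f 0 = t \<and> (\<forall>i. det_step (f i) (f (Suc i))))"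

text \<open>Alphabet {c_0,...,c_(m-1)} (0-indexed, ordered by index).
  Symbol c_i is \<lambda>x_1...x_m. x_(i+1).\<close>
definition lams :: "nat \<Rightarrow> trm \<Rightarrow> trm" where
  "lams m t = (Lam ^^ m) t"

definition enc_sym :: "nat \<Rightarrow> nat \<Rightarrow> trm" where
  "enc_sym m i = lams m (Var (m - 1 - i))"

fun enc_str :: "nat \<Rightarrow> nat list \<Rightarrow> trm" where
  "enc_str m [] = lams (Suc m) (Var 0)"
| "enc_str m (i # r) = lams (Suc m) (App (Var (m - i)) (enc_str m r))"

datatype dir = L | R | N

text \<open>Sigma = {0..<nsym}, blank = nsym (ordered last), Q = {0..<nst}.\<close>
record tm =
  nsym :: nat
  nst :: nat
  q_in :: nat
  q_fin :: nat
  delta :: "nat \<Rightarrow> nat \<Rightarrow> (nat \<times> nat \<times> dir) option"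

definition blank :: "tm \<Rightarrow> nat" where
  "blank M = nsym M"

definition wf_tm :: "tm \<Rightarrow> bool" where
  "wf_tm M \<longleftrightarrow> q_in M < nst M \<and> q_fin M < nst M \<and>
     (\<forall>q a. delta M q a \<noteq> None \<longleftrightarrow> (q < nst M \<and> a \<le> nsym M \<and> q \<noteq> q_fin M)) \<and>
     (\<forall>q a q' b d. delta M q a = Some (q', b, d) \<longrightarrow> q' < nst M \<and> b \<le> nsym M)"

type_synonym config = "nat list \<times> nat \<times> nat list \<times> nat"

definition valid_config :: "tm \<Rightarrow> config \<Rightarrow> bool" where
  "valid_config M C = (case C of (s, a, r, q) \<Rightarrow>
     (\<forall>x\<in>set s. x \<le> nsym M) \<and> a \<le> nsym M \<and> (\<forall>x\<in>set r. x \<le> nsym M) \<and> q < nst M)"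

definition final :: "tm \<Rightarrow> config \<Rightarrow> bool" where
  "final M C = (case C of (s, a, r, q) \<Rightarrow> q = q_fin M)"

inductive tm_step :: "tm \<Rightarrow> config \<Rightarrow> config \<Rightarrow> bool" for M where
  stay: "delta M q a = Some (q', b, N) \<Longrightarrow> tm_step M (s, a, r, q) (s, b, r, q')"
| left: "delta M q a = Some (q', b, L) \<Longrightarrow> tm_step M (s' @ [c], a, r, q) (s', c, b # r, q')"
| left_end: "delta M q a = Some (q', b, L) \<Longrightarrow> tm_step M ([], a, r, q) ([], blank M, b # r, q')"
| right: "delta M q a = Some (q', b, R) \<Longrightarrow> tm_step M (s, a, c # r', q) (s @ [b], c, r', q')"
| right_end: "delta M q a = Some (q', b, R) \<Longrightarrow> tm_step M (s, a, [], q) (s @ [b], blank M, [], q')"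

text \<open>Encoding of a configuration: \<lambda>x. x <s^R> <a> <r> <q>.\<close>
definition enc_config :: "tm \<Rightarrow> config \<Rightarrow> trm" where
  "enc_config M C = (case C of (s, a, r, q) \<Rightarrow>
     Lam (App (App (App (App (Var 0) (enc_str (Suc (nsym M)) (rev s)))
        (enc_sym (Suc (nsym M)) a)) (enc_str (Suc (nsym M)) r)) (enc_sym (nst M) q)))"

end

theory Submission
  imports Defs
begin

text \<open>The term is a Turing-style fixed point: the loop state \<open>W W \<ulcorner>C\<urcorner> k\<close> unfolds
  to a body that uses the Scott encodings as their own case distinctions, first on the
  state and then on the head symbol, to select a branch implementing \<open>\<delta>(q, a)\<close>.
  A move to the left or right additionally dispatches on the tape string in that
  direction (nonempty or empty) and rebuilds the encoded successor configuration, so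
  after at most \<open>19 + |Q| + 2|\<Sigma>\<^sub>\<Box>|\<close> steps the loop state of the successor
  configuration is reached. In the final state the body instead passes the encoded
  configuration to \<open>k\<close>. Since every simulated transition costs at least one reduction
  step, a run that never halts yields an infinite reduction sequence.\<close>

section \<open>Reduction sequences of the deterministic calculus\<close>

definition apps :: "trm \<Rightarrow> trm list \<Rightarrow> trm" where
  "apps t us = foldl App t us"

lemma apps_Nil [simp]: "apps t [] = t"
  by (simp add: apps_def)

lemma apps_Cons: "apps t (u # us) = apps (App t u) us"
  by (simp add: apps_def)

lemma apps_append: "apps t (xs @ ys) = apps (apps t xs) ys"
  by (simp add: apps_def)

declare relpowp.simps(2) [simp del]

lemma lams_0 [simp]: "lams 0 t = t"
  by (simp add: lams_def)

lemma lams_Suc: "lams (Suc n) t = Lam (lams n t)"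
  by (simp add: lams_def)

lemma closed_at_mono: "closed_at d t \<Longrightarrow> d \<le> e \<Longrightarrow> closed_at e t"
  by (induction t arbitrary: d e) fastforce+

lemma subst_closed_at: "closed_at d t \<Longrightarrow> d \<le> e \<Longrightarrow> subst t e s = t"
  by (induction t arbitrary: d e s) fastforce+

lemma lift_closed_at: "closed_at d t \<Longrightarrow> d \<le> e \<Longrightarrow> lift t e = t"
  by (induction t arbitrary: d e) fastforce+

lemma subst_lift: "subst (lift t d) d s = t"
  by (induction t arbitrary: d s) auto

lemma closed_at_apps [simp]:
  "closed_at d (apps t us) \<longleftrightarrow> closed_at d t \<and> (\<forall>u\<in>set us. closed_at d u)"
  by (induction us arbitrary: t) (auto simp: apps_Cons)

lemma closed_at_lams [simp]: "closed_at d (lams n t) = closed_at (d + n) t"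
  by (induction n arbitrary: d) (auto simp: lams_Suc)

lemma det_term_apps [simp]:
  "det_term (apps t us) \<longleftrightarrow> det_term t \<and> (\<forall>u\<in>set us. is_val u \<and> det_term u)"
  by (induction us arbitrary: t) (auto simp: apps_Cons)

lemma det_term_lams [simp]: "det_term (lams n t) = det_term t"
  by (induction n) (auto simp: lams_Suc)

lemma is_val_lams [simp]: "is_val (lams n t) \<longleftrightarrow> 0 < n \<or> is_val t"
  by (cases n) (auto simp: lams_Suc)

text \<open>The terms
  \<open>es\<close> are not lifted under binders, so it is only meant for closed \<open>es\<close>.\<close>

fun substs :: "trm list \<Rightarrow> nat \<Rightarrow> trm \<Rightarrow> trm" where
  "substs es d (Var i) =
     (if i < d then Var i else if i - d < length es then es ! (i - d) else Var (i - length es))"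
| "substs es d (Lam t) = Lam (substs es (Suc d) t)"
| "substs es d (App t u) = App (substs es d t) (substs es d u)"

lemma substs_Nil [simp]: "substs [] d t = t"
  by (induction t arbitrary: d) auto

lemma substs_closed_at: "closed_at d t \<Longrightarrow> d \<le> e \<Longrightarrow> substs es e t = t"
  by (induction t arbitrary: d e) fastforce+

lemma substs_closed: "closed_at 0 t \<Longrightarrow> substs es e t = t"
  using substs_closed_at by blast

lemma map_substs_closed: "\<forall>x\<in>set xs. closed_at 0 x \<Longrightarrow> map (substs es d) xs = xs"
  by (induction xs) (auto simp: substs_closed)

lemma substs_lams [simp]: "substs es d (lams n t) = lams n (substs es (d + n) t)"
  by (induction n arbitrary: d) (auto simp: lams_Suc)

lemma substs_apps [simp]: "substs es d (apps t us) = apps (substs es d t) (map (substs es d) us)"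
  by (induction us arbitrary: t) (auto simp: apps_Cons)

lemma subst_substs:
  assumes "\<forall>e\<in>set es. closed_at 0 e" "closed_at 0 v"
  shows "subst (substs es (Suc d) t) d v = substs (v # es) d t"
  using assms
proof (induction t arbitrary: d)
  case (Var i)
  consider "i \<le> d" | "d < i" "i - Suc d < length es" | "d < i" "\<not> i - Suc d < length es"
    by linarith
  then show ?case
  proof cases
    case 3
    then show ?thesis by auto
  next
    case 2
    then have "(v # es) ! (i - d) = es ! (i - Suc d)" "i - d < Suc (length es)"
      by (simp_all add: Suc_diff_Suc)
    moreover have "subst (es ! (i - Suc d)) d v = es ! (i - Suc d)"
      using 2 Var.prems subst_closed_at by (meson le0 nth_mem)
    ultimately show ?thesis
      using 2 by simp
  qed auto
next
  case (Lam t)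
  then show ?case by (simp add: lift_closed_at)
qed simp

lemma subst_lams: "closed_at 0 v \<Longrightarrow> subst (lams n t) d v = lams n (subst t (d + n) v)"
  by (induction n arbitrary: d) (simp_all add: lams_Suc lift_closed_at)

lemma det_steps_App: "(det_step ^^ n) t t' \<Longrightarrow> (det_step ^^ n) (App t v) (App t' v)"
proof (induction n arbitrary: t)
  case (Suc n)
  then obtain y where "det_step t y" "(det_step ^^ n) y t'"
    by (blast dest: relpowp_Suc_D2)
  with Suc.IH show ?case
    by (blast intro: relpowp_Suc_I2 det_step.ctx)
qed simp

lemma det_steps_apps: "(det_step ^^ n) t t' \<Longrightarrow> (det_step ^^ n) (apps t us) (apps t' us)"
  by (induction us arbitrary: t t') (auto simp: apps_Cons det_steps_App)

lemma det_steps_trans [trans]: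
  "(det_step ^^ a) x y \<Longrightarrow> (det_step ^^ b) y z \<Longrightarrow> (det_step ^^ (a + b)) x z"
  by (auto simp: relpowp_add)

lemma diverges_if_always_steps:
  assumes "\<And>t. P t \<Longrightarrow> \<exists>t'. det_step t t' \<and> P t'" "P t"
  shows "diverges t"
proof -
  obtain f where "\<forall>n. (P (f n) \<and> (n = 0 \<longrightarrow> f n = t)) \<and> det_step (f n) (f (Suc n))"
    using dependent_nat_choice[of "\<lambda>n x. P x \<and> (n = 0 \<longrightarrow> x = t)" "\<lambda>_. det_step"] assms
    by blast
  then show ?thesis
    unfolding diverges_def by blast
qed

lemma diverges_if_recurrent:
  assumes recurrent: "\<And>x. x \<in> S \<Longrightarrow> \<exists>y\<in>S. \<exists>j>0. (det_step ^^ j) (g x) (g y)"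
    and "x \<in> S" "(det_step ^^ i) t (g x)"
  shows "diverges t"
proof (rule diverges_if_always_steps[where P = "\<lambda>t. \<exists>i. \<exists>x\<in>S. (det_step ^^ i) t (g x)"])
  fix t
  assume "\<exists>i. \<exists>x\<in>S. (det_step ^^ i) t (g x)"
  then obtain i x where x: "x \<in> S" "(det_step ^^ i) t (g x)"
    by blast
  obtain i' y where "y \<in> S" "(det_step ^^ Suc i') t (g y)"
  proof (cases i)
    case 0
    with x have "t = g x"
      by simp
    with recurrent[OF x(1)] obtain y j where "y \<in> S" "j > 0" "(det_step ^^ j) t (g y)"
      by auto
    then show ?thesis
      using that by (metis gr0_implies_Suc)
  next
    case (Suc i')
    with x that show ?thesis
      by blast
  qed
  then show "\<exists>t'. det_step t t' \<and> (\<exists>i. \<exists>x\<in>S. (det_step ^^ i) t' (g x))"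
    by (meson relpowp_Suc_D2)
qed (use assms in blast)

lemma beta_lams_substs:
  assumes "length vs = n" "\<forall>v\<in>set vs. closed_at 0 v" "\<forall>e\<in>set es. closed_at 0 e"
  shows "(det_step ^^ n) (apps (lams n (substs es n t)) vs) (substs (rev vs @ es) 0 t)"
  using assms
proof (induction vs arbitrary: n es)
  case (Cons v vs)
  then obtain n' where n: "n = Suc n'"
    by auto
  have "det_step (App (lams n (substs es n t)) v) (subst (lams n' (substs es (Suc n') t)) 0 v)"
    unfolding n lams_Suc by (rule det_step.beta)
  also have "subst (lams n' (substs es (Suc n') t)) 0 v = lams n' (substs (v # es) n' t)"
    using Cons.prems by (simp add: subst_lams subst_substs)
  finally have "(det_step ^^ 1) (apps (lams n (substs es n t)) (v # vs))
      (apps (lams n' (substs (v # es) n' t)) vs)"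
    unfolding apps_Cons by (intro det_steps_apps) simp
  moreover have "(det_step ^^ n') (apps (lams n' (substs (v # es) n' t)) vs)
      (substs (rev vs @ v # es) 0 t)"
    using Cons n by simp
  ultimately show ?case
    using det_steps_trans n by fastforce
qed simp

lemma beta_lams:
  assumes "length vs = n" "\<forall>v\<in>set vs. closed_at 0 v"
  shows "(det_step ^^ n) (apps (lams n t) (vs @ ys)) (apps (substs (rev vs) 0 t) ys)"
  using det_steps_apps[OF beta_lams_substs[OF assms, of "[]" t]] by (simp add: apps_append)

lemma beta_lams_eq:
  assumes "length vs = n" "\<forall>v\<in>set vs. closed_at 0 v" "substs (rev vs) 0 t = u"
  shows "(det_step ^^ n) (apps (lams n t) vs) u"
  using beta_lams[OF assms(1,2), of t "[]"] assms(3) by simp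

lemma closed_at_enc_str [simp]: "closed_at d (enc_str m xs)"
  by (induction xs arbitrary: d) auto

lemma closed_at_enc_sym [simp]: "0 < n \<Longrightarrow> closed_at d (enc_sym n i)"
  by (simp add: enc_sym_def)

lemma is_val_enc_str [simp]: "is_val (enc_str m xs)"
  by (cases xs) auto

lemma enc_sym_steps:
  assumes "i < n" "length bs = n" "\<forall>b\<in>set bs. closed_at 0 b"
  shows "(det_step ^^ n) (apps (enc_sym n i) (bs @ ys)) (apps (bs ! i) ys)"
  using beta_lams[OF assms(2,3), of "Var (n - 1 - i)" ys] assms
  by (simp add: enc_sym_def rev_nth)

lemma enc_str_Cons_steps:
  assumes "c < m" "length bs = m" "\<forall>b\<in>set bs. closed_at 0 b" "closed_at 0 e"
  shows "(det_step ^^ Suc m) (apps (enc_str m (c # xs)) (bs @ e # ys))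
    (apps (bs ! c) (enc_str m xs # ys))"
proof -
  have "(e # rev bs) ! (m - c) = bs ! c"
    using assms by (simp add: Suc_diff_Suc rev_nth)
  then show ?thesis
    using beta_lams[of "bs @ [e]" "Suc m" "App (Var (m - c)) (enc_str m xs)" ys] assms
    by (simp add: apps_Cons apps_append substs_closed less_Suc_eq_le)
qed

lemma enc_str_Nil_steps:
  assumes "length bs = m" "\<forall>b\<in>set bs. closed_at 0 b" "closed_at 0 e"
  shows "(det_step ^^ Suc m) (apps (enc_str m []) (bs @ e # ys)) (apps e ys)"
  using beta_lams[of "bs @ [e]" "Suc m" "Var 0" ys] assms by simp

lemma wf_tm_nst_pos: "wf_tm M \<Longrightarrow> 0 < nst M"
  by (auto simp: wf_tm_def)

lemma wf_tm_delta_Some: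
  assumes "wf_tm M" "delta M q a = Some (q', b, d)"
  shows "q \<noteq> q_fin M" "q' < nst M" "b \<le> nsym M"
  using assms unfolding wf_tm_def by (metis option.distinct(1))+

lemma wf_tm_delta_defined:
  assumes "wf_tm M" "q < nst M" "a \<le> nsym M" "q \<noteq> q_fin M"
  obtains q' b d where "delta M q a = Some (q', b, d)"
  using assms unfolding wf_tm_def by (metis not_Some_eq prod_cases3)

lemma valid_config_tm_step:
  assumes "wf_tm M" "valid_config M C" "tm_step M C C'"
  shows "valid_config M C'"
  using assms(3,2)
  by cases (auto simp: valid_config_def blank_def dest: wf_tm_delta_Some[OF assms(1)])

lemma tm_step_exists:
  assumes "wf_tm M" "valid_config M C" "\<not> final M C"
  shows "\<exists>C'. tm_step M C C'"
proof -
  obtain s a r q where C: "C = (s, a, r, q)"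
    by (cases C)
  with assms obtain q' b d where d: "delta M q a = Some (q', b, d)"
    by (auto simp: valid_config_def final_def elim: wf_tm_delta_defined)
  show ?thesis
  proof (cases d)
    case N
    then show ?thesis using d C tm_step.stay by blast
  next
    case L
    then show ?thesis
      using d C tm_step.left tm_step.left_end by (cases s rule: rev_cases) blast+
  next
    case R
    then show ?thesis
      using d C tm_step.right tm_step.right_end by (cases r) blast+
  qed
qed

section \<open>The simulating term\<close>

abbreviation ntsym :: "tm \<Rightarrow> nat" where
  "ntsym M \<equiv> Suc (nsym M)"

abbreviation enc_tsym :: "tm \<Rightarrow> nat \<Rightarrow> trm" where
  "enc_tsym M a \<equiv> enc_sym (ntsym M) a"

abbreviation enc_tape :: "tm \<Rightarrow> nat list \<Rightarrow> trm" where
  "enc_tape M xs \<equiv> enc_str (ntsym M) xs"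

abbreviation enc_state :: "tm \<Rightarrow> nat \<Rightarrow> trm" where
  "enc_state M q \<equiv> enc_sym (nst M) q"

lemma enc_config_eq:
  "enc_config M (s, a, r, q) =
    Lam (apps (Var 0) [enc_tape M (rev s), enc_tsym M a, enc_tape M r, enc_state M q])"
  by (simp add: enc_config_def apps_def)

text \<open>The encoding of the string \<open>b # xs\<close>, where the encoding of \<open>xs\<close> is the variable
  with index \<open>j\<close> outside the term.\<close>

definition enc_cons_var :: "tm \<Rightarrow> nat \<Rightarrow> nat \<Rightarrow> trm" where
  "enc_cons_var M b j = lams (Suc (ntsym M)) (App (Var (ntsym M - b)) (Var (j + Suc (ntsym M))))"

lemma substs_enc_cons_var [simp]:
  assumes "d \<le> j" "j - d < length es"
  shows "substs es d (enc_cons_var M b j) =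
    lams (Suc (ntsym M)) (App (Var (ntsym M - b)) (es ! (j - d)))"
proof -
  have "ntsym M - b < d + Suc (ntsym M)"
    by linarith
  with assms show ?thesis
    by (simp add: enc_cons_var_def)
qed

text \<open>Every branch takes its arguments followed by \<open>W = loop M\<close> and ends in
  \<open>W W \<ulcorner>C'\<urcorner>\<close>, where \<open>C'\<close> is the successor configuration.\<close>

definition stay_branch :: "tm \<Rightarrow> nat \<Rightarrow> nat \<Rightarrow> trm" where
  "stay_branch M q' b = lams 3 (apps (Var 0)
     [Var 0, Lam (apps (Var 0) [Var 3, enc_tsym M b, Var 2, enc_state M q'])])"

definition right_cons :: "tm \<Rightarrow> nat \<Rightarrow> nat \<Rightarrow> nat \<Rightarrow> trm" where
  "right_cons M q' b c = lams 3 (apps (Var 0)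
     [Var 0, Lam (apps (Var 0) [enc_cons_var M b 2, enc_tsym M c, Var 3, enc_state M q'])])"

definition right_nil :: "tm \<Rightarrow> nat \<Rightarrow> nat \<Rightarrow> trm" where
  "right_nil M q' b = lams 2 (apps (Var 0)
     [Var 0, Lam (apps (Var 0) [enc_cons_var M b 2, enc_tsym M (nsym M), enc_tape M [], enc_state M q'])])"

definition right_cons_table :: "tm \<Rightarrow> nat \<Rightarrow> nat \<Rightarrow> trm list" where
  "right_cons_table M q' b = map (right_cons M q' b) [0..<ntsym M]"

definition right_branch :: "tm \<Rightarrow> nat \<Rightarrow> nat \<Rightarrow> trm" where
  "right_branch M q' b =
     lams 3 (apps (Var 1) (right_cons_table M q' b @ [right_nil M q' b, Var 2, Var 0]))"

definition left_cons :: "tm \<Rightarrow> nat \<Rightarrow> nat \<Rightarrow> nat \<Rightarrow> trm" where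
  "left_cons M q' b c = lams 3 (apps (Var 0)
     [Var 0, Lam (apps (Var 0) [Var 3, enc_tsym M c, enc_cons_var M b 2, enc_state M q'])])"

definition left_nil :: "tm \<Rightarrow> nat \<Rightarrow> nat \<Rightarrow> trm" where
  "left_nil M q' b = lams 2 (apps (Var 0)
     [Var 0, Lam (apps (Var 0) [enc_tape M [], enc_tsym M (nsym M), enc_cons_var M b 2, enc_state M q'])])"

definition left_cons_table :: "tm \<Rightarrow> nat \<Rightarrow> nat \<Rightarrow> trm list" where
  "left_cons_table M q' b = map (left_cons M q' b) [0..<ntsym M]"

definition left_branch :: "tm \<Rightarrow> nat \<Rightarrow> nat \<Rightarrow> trm" where
  "left_branch M q' b =
     lams 3 (apps (Var 2) (left_cons_table M q' b @ [left_nil M q' b, Var 1, Var 0]))"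

text \<open>The \<open>None\<close> case only occurs for states or symbols outside the machine.\<close>

definition action :: "tm \<Rightarrow> nat \<Rightarrow> nat \<Rightarrow> trm" where
  "action M q a = (case delta M q a of
       None \<Rightarrow> lams 3 (Var 0)
     | Some (q', b, N) \<Rightarrow> stay_branch M q' b
     | Some (q', b, R) \<Rightarrow> right_branch M q' b
     | Some (q', b, L) \<Rightarrow> left_branch M q' b)"

definition action_table :: "tm \<Rightarrow> nat \<Rightarrow> trm list" where
  "action_table M q = map (action M q) [0..<ntsym M]"

definition halt_branch :: "tm \<Rightarrow> trm" where
  "halt_branch M = lams 4 (Lam (App (Var 0)
     (Lam (apps (Var 0) [Var 5, Var 4, Var 3, enc_state M (q_fin M)]))))"

definition state_branch :: "tm \<Rightarrow> nat \<Rightarrow> trm" where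
  "state_branch M q = (if q = q_fin M then halt_branch M
     else lams 4 (apps (Var 2) (action_table M q @ [Var 3, Var 1, Var 0])))"

definition state_table :: "tm \<Rightarrow> trm list" where
  "state_table M = map (state_branch M) [0..<nst M]"

definition step_body :: "tm \<Rightarrow> trm" where
  "step_body M = lams 5 (apps (Var 1) (state_table M @ [Var 4, Var 3, Var 2, Var 0]))"

definition loop :: "tm \<Rightarrow> trm" where
  "loop M = lams 2 (apps (Var 0) [step_body M, Var 1])"

definition trans_term :: "tm \<Rightarrow> trm" where
  "trans_term M = Lam (Lam (App (App (App (loop M) (loop M)) (Var 0)) (Var 1)))"

definition loop_at :: "tm \<Rightarrow> config \<Rightarrow> trm" where
  "loop_at M C = apps (loop M) [loop M, enc_config M C]"

lemma closed_at_enc_cons_var [simp]: "j < d \<Longrightarrow> closed_at d (enc_cons_var M b j)"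
  by (simp add: enc_cons_var_def)

lemma length_right_cons_table [simp]: "length (right_cons_table M q' b) = ntsym M"
  by (simp add: right_cons_table_def)

lemma length_left_cons_table [simp]: "length (left_cons_table M q' b) = ntsym M"
  by (simp add: left_cons_table_def)

lemma length_action_table [simp]: "length (action_table M q) = ntsym M"
  by (simp add: action_table_def)

lemma length_state_table [simp]: "length (state_table M) = nst M"
  by (simp add: state_table_def)

lemma nth_right_cons_table: "c < ntsym M \<Longrightarrow> right_cons_table M q' b ! c = right_cons M q' b c"
  by (simp add: right_cons_table_def del: upt_Suc)

lemma nth_left_cons_table: "c < ntsym M \<Longrightarrow> left_cons_table M q' b ! c = left_cons M q' b c"
  by (simp add: left_cons_table_def del: upt_Suc)

lemma nth_action_table: "a < ntsym M \<Longrightarrow> action_table M q ! a = action M q a"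
  by (simp add: action_table_def del: upt_Suc)

lemma nth_state_table: "q < nst M \<Longrightarrow> state_table M ! q = state_branch M q"
  by (simp add: state_table_def)

lemma det_term_action: "is_val (action M q a) \<and> det_term (action M q a)"
  by (simp add: action_def stay_branch_def right_branch_def right_cons_table_def right_cons_def
      right_nil_def left_branch_def left_cons_table_def left_cons_def left_nil_def
      enc_cons_var_def enc_sym_def split: option.split dir.split)

lemma det_term_state_branch: "is_val (state_branch M q) \<and> det_term (state_branch M q)"
  by (simp add: state_branch_def halt_branch_def action_table_def det_term_action enc_sym_def
      del: upt_Suc)

lemma det_term_trans_term: "det_term (trans_term M)"
  by (simp add: trans_term_def loop_def step_body_def state_table_def det_term_state_branch)

context
  fixes M :: tm
  assumes nst_pos: "0 < nst M"
begin

lemma closed_at_enc_state [simp]: "closed_at d (enc_state M q)"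
  by (simp add: nst_pos)

lemma closed_at_right_cons [simp]: "closed_at d (right_cons M q' b c)"
  by (rule closed_at_mono[of 0]) (simp_all add: right_cons_def nst_pos)

lemma closed_at_left_cons [simp]: "closed_at d (left_cons M q' b c)"
  by (rule closed_at_mono[of 0]) (simp_all add: left_cons_def nst_pos)

lemma closed_at_right_nil [simp]: "closed_at d (right_nil M q' b)"
  by (rule closed_at_mono[of 0]) (simp_all add: right_nil_def nst_pos)

lemma closed_at_left_nil [simp]: "closed_at d (left_nil M q' b)"
  by (rule closed_at_mono[of 0]) (simp_all add: left_nil_def nst_pos)

lemma closed_at_right_cons_table [simp]: "\<forall>x\<in>set (right_cons_table M q' b). closed_at d x"
  by (simp add: right_cons_table_def)

lemma closed_at_left_cons_table [simp]: "\<forall>x\<in>set (left_cons_table M q' b). closed_at d x"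
  by (simp add: left_cons_table_def)

lemma closed_at_action_table [simp]: "\<forall>x\<in>set (action_table M q). closed_at d x"
  by (auto simp: action_table_def action_def stay_branch_def right_branch_def left_branch_def
      nst_pos intro: closed_at_mono[of 0] split: option.split dir.split)

lemma closed_at_state_table [simp]: "\<forall>x\<in>set (state_table M). closed_at d x"
  by (auto simp: state_table_def state_branch_def halt_branch_def nst_pos intro: closed_at_mono[of 0])

lemma closed_at_step_body [simp]: "closed_at d (step_body M)"
  by (rule closed_at_mono[of 0]) (simp_all add: step_body_def)

lemma closed_at_loop [simp]: "closed_at d (loop M)"
  by (rule closed_at_mono[of 0]) (simp_all add: loop_def)

section \<open>Reduction of the simulating term\<close>

lemma loop_steps:
  "closed_at 0 C \<Longrightarrow> (det_step ^^ 2) (apps (loop M) [loop M, C]) (apps C [step_body M, loop M])"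
  using beta_lams[of "[loop M, C]" 2 "apps (Var 0) [step_body M, Var 1]" "[]"]
  by (simp add: loop_def substs_closed)

lemma loop_at_steps_state_branch:
  assumes "q < nst M"
  shows "(det_step ^^ (8 + nst M)) (loop_at M (s, a, r, q))
    (apps (state_branch M q) [enc_tape M (rev s), enc_tsym M a, enc_tape M r, loop M])"
proof -
  let ?cfg = "[enc_tape M (rev s), enc_tsym M a, enc_tape M r]"
  let ?C = "Lam (apps (Var 0) (?cfg @ [enc_state M q]))"
  have "(det_step ^^ 2) (loop_at M (s, a, r, q)) (apps ?C [step_body M, loop M])"
    using loop_steps[of ?C] by (simp add: loop_at_def enc_config_eq)
  also have "(det_step ^^ 1) \<dots> (apps (step_body M) (?cfg @ [enc_state M q, loop M]))"
    using beta_lams[of "[step_body M]" 1 "apps (Var 0) (?cfg @ [enc_state M q])" "[loop M]"]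
    by (simp add: substs_closed lams_Suc apps_append[symmetric])
  also have "(det_step ^^ 5) \<dots> (apps (enc_state M q) (state_table M @ ?cfg @ [loop M]))"
    unfolding step_body_def
    by (rule beta_lams_eq) (simp_all add: substs_closed map_substs_closed)
  also have "(det_step ^^ nst M) \<dots> (apps (state_branch M q) (?cfg @ [loop M]))"
    using enc_sym_steps[of q "nst M" "state_table M" "?cfg @ [loop M]"] assms
    by (simp add: nth_state_table)
  finally show ?thesis
    by simp
qed

lemma state_branch_steps_action:
  assumes "q \<noteq> q_fin M" "a < ntsym M" "closed_at 0 l" "closed_at 0 r"
  shows "(det_step ^^ (4 + ntsym M)) (apps (state_branch M q) [l, enc_tsym M a, r, loop M])
    (apps (action M q a) [l, r, loop M])"
proof -
  have "(det_step ^^ 4) (apps (state_branch M q) [l, enc_tsym M a, r, loop M])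
      (apps (enc_tsym M a) (action_table M q @ [l, r, loop M]))"
    unfolding state_branch_def using assms
    by (simp, intro beta_lams_eq) (simp_all add: substs_closed map_substs_closed)
  also have "(det_step ^^ ntsym M) \<dots> (apps (action M q a) [l, r, loop M])"
    using enc_sym_steps[of a "ntsym M" "action_table M q"] assms
    by (simp add: nth_action_table)
  finally show ?thesis .
qed

lemma halt_branch_steps:
  assumes "closed_at 0 l" "closed_at 0 a" "closed_at 0 r"
  shows "(det_step ^^ 5) (apps (halt_branch M) [l, a, r, loop M, k])
    (App k (Lam (apps (Var 0) [l, a, r, enc_state M (q_fin M)])))"
proof -
  let ?D = "Lam (apps (Var 0) [l, a, r, enc_state M (q_fin M)])"
  have "(det_step ^^ 4) (apps (halt_branch M) [l, a, r, loop M, k]) (App (Lam (App (Var 0) ?D)) k)"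
    using beta_lams[of "[l, a, r, loop M]" 4
        "Lam (App (Var 0) (Lam (apps (Var 0) [Var 5, Var 4, Var 3, enc_state M (q_fin M)])))" "[k]"]
      assms
    by (simp add: halt_branch_def substs_closed apps_Cons)
  moreover have "closed_at 0 ?D"
    using assms by (auto intro: closed_at_mono)
  then have "(det_step ^^ 1) (App (Lam (App (Var 0) ?D)) k) (App k ?D)"
    using det_step.beta[of "App (Var 0) ?D" k] subst_closed_at[of 0 ?D 0 k] by simp
  ultimately show ?thesis
    using det_steps_trans by fastforce
qed

lemma stay_branch_steps:
  "(det_step ^^ 3) (apps (stay_branch M q' b) [enc_tape M (rev s), enc_tape M r, loop M])
    (loop_at M (s, b, r, q'))"
  unfolding stay_branch_def loop_at_def enc_config_eq
  by (rule beta_lams_eq) (simp_all add: substs_closed)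

lemma left_branch_steps_Cons:
  assumes "c < ntsym M"
  shows "(det_step ^^ (ntsym M + 7))
    (apps (left_branch M q' b) [enc_tape M (c # rev s), enc_tape M r, loop M])
    (loop_at M (s, c, b # r, q'))"
proof -
  let ?l = "enc_tape M (c # rev s)" and ?r = "enc_tape M r"
  have "(det_step ^^ 3) (apps (left_branch M q' b) [?l, ?r, loop M])
      (apps ?l (left_cons_table M q' b @ [left_nil M q' b, ?r, loop M]))"
    unfolding left_branch_def
    by (rule beta_lams_eq) (simp_all add: substs_closed map_substs_closed)
  also have "(det_step ^^ Suc (ntsym M)) \<dots>
      (apps (left_cons M q' b c) [enc_tape M (rev s), ?r, loop M])"
    using enc_str_Cons_steps[of c "ntsym M" "left_cons_table M q' b"] assms
    by (simp add: nth_left_cons_table)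
  also have "(det_step ^^ 3) \<dots> (loop_at M (s, c, b # r, q'))"
    unfolding left_cons_def loop_at_def enc_config_eq
    by (rule beta_lams_eq) (simp_all add: substs_closed)
  finally show ?thesis
    by simp
qed

lemma left_branch_steps_Nil:
  "(det_step ^^ (ntsym M + 6)) (apps (left_branch M q' b) [enc_tape M [], enc_tape M r, loop M])
    (loop_at M ([], blank M, b # r, q'))"
proof -
  let ?l = "enc_tape M []" and ?r = "enc_tape M r"
  have "(det_step ^^ 3) (apps (left_branch M q' b) [?l, ?r, loop M])
      (apps ?l (left_cons_table M q' b @ [left_nil M q' b, ?r, loop M]))"
    unfolding left_branch_def
    by (rule beta_lams_eq) (simp_all add: substs_closed map_substs_closed)
  also have "(det_step ^^ Suc (ntsym M)) \<dots> (apps (left_nil M q' b) [?r, loop M])"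
    by (rule enc_str_Nil_steps) simp_all
  also have "(det_step ^^ 2) \<dots> (loop_at M ([], blank M, b # r, q'))"
    unfolding left_nil_def loop_at_def enc_config_eq blank_def
    by (rule beta_lams_eq) (simp_all add: substs_closed)
  finally show ?thesis
    by simp
qed

lemma right_branch_steps_Cons:
  assumes "c < ntsym M"
  shows "(det_step ^^ (ntsym M + 7))
    (apps (right_branch M q' b) [enc_tape M (rev s), enc_tape M (c # r), loop M])
    (loop_at M (s @ [b], c, r, q'))"
proof -
  let ?l = "enc_tape M (rev s)" and ?r = "enc_tape M (c # r)"
  have "(det_step ^^ 3) (apps (right_branch M q' b) [?l, ?r, loop M])
      (apps ?r (right_cons_table M q' b @ [right_nil M q' b, ?l, loop M]))"
    unfolding right_branch_def
    by (rule beta_lams_eq) (simp_all add: substs_closed map_substs_closed)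
  also have "(det_step ^^ Suc (ntsym M)) \<dots>
      (apps (right_cons M q' b c) [enc_tape M r, ?l, loop M])"
    using enc_str_Cons_steps[of c "ntsym M" "right_cons_table M q' b"] assms
    by (simp add: nth_right_cons_table)
  also have "(det_step ^^ 3) \<dots> (loop_at M (s @ [b], c, r, q'))"
    unfolding right_cons_def loop_at_def enc_config_eq
    by (rule beta_lams_eq) (simp_all add: substs_closed)
  finally show ?thesis
    by simp
qed

lemma right_branch_steps_Nil:
  "(det_step ^^ (ntsym M + 6)) (apps (right_branch M q' b) [enc_tape M (rev s), enc_tape M [], loop M])
    (loop_at M (s @ [b], blank M, [], q'))"
proof -
  let ?l = "enc_tape M (rev s)" and ?r = "enc_tape M []"
  have "(det_step ^^ 3) (apps (right_branch M q' b) [?l, ?r, loop M])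
      (apps ?r (right_cons_table M q' b @ [right_nil M q' b, ?l, loop M]))"
    unfolding right_branch_def
    by (rule beta_lams_eq) (simp_all add: substs_closed map_substs_closed)
  also have "(det_step ^^ Suc (ntsym M)) \<dots> (apps (right_nil M q' b) [?l, loop M])"
    by (rule enc_str_Nil_steps) simp_all
  also have "(det_step ^^ 2) \<dots> (loop_at M (s @ [b], blank M, [], q'))"
    unfolding right_nil_def loop_at_def enc_config_eq blank_def
    by (rule beta_lams_eq) (simp_all add: substs_closed)
  finally show ?thesis
    by simp
qed

end

section \<open>Simulation of runs\<close>

context
  fixes M :: tm
  assumes wf: "wf_tm M"
begin

lemma nst_pos [simp]: "0 < nst M"
  using wf by (rule wf_tm_nst_pos)

lemma action_steps:
  assumes "valid_config M (s, a, r, q)" "tm_step M (s, a, r, q) C'"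
  shows "\<exists>j>0. j \<le> ntsym M + 7 \<and>
    (det_step ^^ j) (apps (action M q a) [enc_tape M (rev s), enc_tape M r, loop M]) (loop_at M C')"
  using assms(2)
proof cases
  case (stay q' b)
  then show ?thesis
    using stay_branch_steps[of M q' b s r] by (intro exI[of _ 3]) (simp add: action_def)
next
  case (left q' b s' c)
  with assms(1) have "c < ntsym M"
    by (simp add: valid_config_def)
  with left show ?thesis
    using left_branch_steps_Cons[of M c q' b s' r]
    by (intro exI[of _ "ntsym M + 7"]) (simp add: action_def)
next
  case (left_end q' b)
  then show ?thesis
    using left_branch_steps_Nil[of M q' b r]
    by (intro exI[of _ "ntsym M + 6"]) (simp add: action_def)
next
  case (right q' b c r')
  with assms(1) have "c < ntsym M"
    by (simp add: valid_config_def)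
  with right show ?thesis
    using right_branch_steps_Cons[of M c q' b s r']
    by (intro exI[of _ "ntsym M + 7"]) (simp add: action_def)
next
  case (right_end q' b)
  then show ?thesis
    using right_branch_steps_Nil[of M q' b s]
    by (intro exI[of _ "ntsym M + 6"]) (simp add: action_def)
qed

lemma loop_at_step:
  assumes "valid_config M C" "tm_step M C C'"
  shows "\<exists>j>0. j \<le> 19 + nst M + 2 * ntsym M \<and> (det_step ^^ j) (loop_at M C) (loop_at M C')"
proof -
  obtain s a r q where C: "C = (s, a, r, q)"
    by (cases C)
  from assms(2) obtain q' b d where "delta M q a = Some (q', b, d)"
    unfolding C by cases auto
  then have q: "q \<noteq> q_fin M"
    using wf_tm_delta_Some(1)[OF wf] by blast
  have "(det_step ^^ (8 + nst M)) (loop_at M C)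
      (apps (state_branch M q) [enc_tape M (rev s), enc_tsym M a, enc_tape M r, loop M])"
    using loop_at_steps_state_branch[OF nst_pos] assms(1) by (simp add: C valid_config_def)
  also have "(det_step ^^ (4 + ntsym M)) \<dots>
      (apps (action M q a) [enc_tape M (rev s), enc_tape M r, loop M])"
    using state_branch_steps_action[OF nst_pos q] assms(1) by (simp add: C valid_config_def)
  finally have dispatch: "(det_step ^^ (12 + nst M + ntsym M)) (loop_at M C)
      (apps (action M q a) [enc_tape M (rev s), enc_tape M r, loop M])"
    by simp
  obtain j where "j > 0" "j \<le> ntsym M + 7"
    "(det_step ^^ j) (apps (action M q a) [enc_tape M (rev s), enc_tape M r, loop M]) (loop_at M C')"
    using action_steps assms unfolding C by blast
  with dispatch show ?thesis
    by (intro exI[of _ "12 + nst M + ntsym M + j"]) (simp add: det_steps_trans)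
qed

lemma loop_at_final_steps:
  assumes "final M D"
  shows "(det_step ^^ (13 + nst M)) (App (loop_at M D) k) (App k (enc_config M D))"
proof -
  obtain s a r where D: "D = (s, a, r, q_fin M)"
    using assms by (cases D) (simp add: final_def)
  have "(det_step ^^ (8 + nst M)) (App (loop_at M D) k)
      (apps (halt_branch M) [enc_tape M (rev s), enc_tsym M a, enc_tape M r, loop M, k])"
    using det_steps_App[OF loop_at_steps_state_branch[OF nst_pos, of "q_fin M" s a r], of k] wf
    by (simp add: D state_branch_def wf_tm_def apps_Cons)
  also have "(det_step ^^ 5) \<dots> (App k (enc_config M D))"
    using halt_branch_steps[OF nst_pos] by (simp add: D enc_config_eq)
  finally show ?thesis
    by simp
qed

lemma loop_at_halts:
  assumes "(tm_step M ^^ n) C D" "valid_config M C" "final M D"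
  shows "\<exists>m \<le> (19 + nst M + 2 * ntsym M) * n + 13 + nst M.
    (det_step ^^ m) (App (loop_at M C) k) (App k (enc_config M D))"
  using assms
proof (induction n arbitrary: C)
  case 0
  then show ?case
    using loop_at_final_steps[of D k] by auto
next
  case (Suc n)
  then obtain C' where step: "tm_step M C C'" and run: "(tm_step M ^^ n) C' D"
    by (meson relpowp_Suc_E2)
  with Suc.prems obtain m where m: "m \<le> (19 + nst M + 2 * ntsym M) * n + 13 + nst M"
    "(det_step ^^ m) (App (loop_at M C') k) (App k (enc_config M D))"
    using Suc.IH valid_config_tm_step[OF wf] by blast
  obtain j where "j \<le> 19 + nst M + 2 * ntsym M" "(det_step ^^ j) (loop_at M C) (loop_at M C')"
    using loop_at_step[OF Suc.prems(2) step] by blast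
  with m show ?case
    by (intro exI[of _ "j + m"]) (auto intro: det_steps_trans det_steps_App)
qed

lemma loop_at_diverges:
  assumes "(det_step ^^ i) t (App (loop_at M C) k)"
    and "valid_config M C" "\<nexists>n D. (tm_step M ^^ n) C D \<and> final M D"
  shows "diverges t"
proof -
  define S where "S = {C. valid_config M C \<and> (\<nexists>n D. (tm_step M ^^ n) C D \<and> final M D)}"
  have "\<exists>C'\<in>S. \<exists>j>0. (det_step ^^ j) (App (loop_at M C) k) (App (loop_at M C') k)"
    if "C \<in> S" for C
  proof -
    from that have valid: "valid_config M C" and never: "\<nexists>n D. (tm_step M ^^ n) C D \<and> final M D"
      unfolding S_def by blast+
    then have "\<not> final M C"
      by (metis relpowp_0_I)
    then obtain C' where step: "tm_step M C C'"
      using tm_step_exists[OF wf valid] by blast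
    have "C' \<in> S"
      unfolding S_def using valid_config_tm_step[OF wf valid step] never relpowp_Suc_I2[of "tm_step M", OF step]
      by blast
    moreover obtain j where "j > 0" "(det_step ^^ j) (loop_at M C) (loop_at M C')"
      using loop_at_step[OF valid step] by blast
    ultimately show ?thesis
      by (blast intro: det_steps_App)
  qed
  then show ?thesis
    using diverges_if_recurrent[of S "\<lambda>C. App (loop_at M C) k" C i t] assms by (simp add: S_def)
qed

lemma trans_term_steps:
  "(det_step ^^ 2) (App (App (trans_term M) k) (enc_config M C)) (App (loop_at M C) k)"
proof -
  let ?body = "App (App (App (loop M) (loop M)) (Var 0)) (lift k 0)"
  have loop_subst: "subst (loop M) d t = loop M" for d t
    by (rule subst_closed_at[of 0]) simp_all
  have "det_step (App (trans_term M) k) (Lam ?body)"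
    using det_step.beta[of "Lam (App (App (App (loop M) (loop M)) (Var 0)) (Var 1))" k]
    by (simp add: trans_term_def loop_subst)
  then have "(det_step ^^ 1) (App (App (trans_term M) k) (enc_config M C))
      (App (Lam ?body) (enc_config M C))"
    by (simp add: det_step.ctx)
  also have "(det_step ^^ 1) \<dots> (App (loop_at M C) k)"
    using det_step.beta[of ?body "enc_config M C"]
    by (simp add: loop_subst subst_lift loop_at_def apps_Cons)
  finally show ?thesis
    by (simp add: numeral_2_eq_2)
qed

lemma closed_trans_term: "closed (trans_term M)"
  by (simp add: closed_def trans_term_def)

lemma trans_term_halts:
  assumes "(tm_step M ^^ n) C D" "valid_config M C" "final M D"
  shows "\<exists>m \<le> (21 + nst M + 2 * ntsym M) * (n + 1).
    (det_step ^^ m) (App (App (trans_term M) k) (enc_config M C)) (App k (enc_config M D))"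
proof -
  obtain m where m: "m \<le> (19 + nst M + 2 * ntsym M) * n + 13 + nst M"
    "(det_step ^^ m) (App (loop_at M C) k) (App k (enc_config M D))"
    using loop_at_halts[OF assms] by blast
  then have "(det_step ^^ (2 + m)) (App (App (trans_term M) k) (enc_config M C))
      (App k (enc_config M D))"
    using trans_term_steps det_steps_trans by blast
  moreover have "2 + m \<le> (21 + nst M + 2 * ntsym M) * (n + 1)"
    using m(1) by (simp add: algebra_simps)
  ultimately show ?thesis
    by blast
qed

end

text \<open>The continuation \<open>k\<close> is never reduced.\<close>

theorem mainTheorem8:
  fixes M :: tm
  assumes "wf_tm M"
  shows "\<exists>trans (c::nat). closed trans \<and> det_term trans \<and>
    (\<forall>k C. is_val k \<and> det_term k \<and> valid_config M C \<longrightarrow>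
      (\<forall>n D. (tm_step M ^^ n) C D \<and> final M D \<longrightarrow>
         (\<exists>m \<le> c * (n + 1). (det_step ^^ m) (App (App trans k) (enc_config M C)) (App k (enc_config M D)))) \<and>
      ((\<nexists>n D. (tm_step M ^^ n) C D \<and> final M D) \<longrightarrow>
         diverges (App (App trans k) (enc_config M C))))"
proof -
  have "\<exists>m \<le> (21 + nst M + 2 * Suc (nsym M)) * (n + 1).
      (det_step ^^ m) (App (App (trans_term M) k) (enc_config M C)) (App k (enc_config M D))"
    if "(tm_step M ^^ n) C D" "valid_config M C" "final M D" for k C n D
    using trans_term_halts[OF assms that] .
  moreover have "diverges (App (App (trans_term M) k) (enc_config M C))"
    if "valid_config M C" "\<nexists>n D. (tm_step M ^^ n) C D \<and> final M D" for k C
    using loop_at_diverges[OF assms trans_term_steps[OF assms] that] .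
  ultimately show ?thesis
    using closed_trans_term[OF assms] det_term_trans_term
    by (intro exI[of _ "trans_term M"] exI[of _ "21 + nst M + 2 * Suc (nsym M)"]) blast
qed

end
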